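(* Let $d\ge2$, $\gamma>0$, $\beta\in(0,1)$, and let $\psi:\mathbb R^d\to\mathbb C^d$ be a vector field (with the integrals below convergent) such that $\mathcal R_\beta[\psi]=\psi$. Then $\mathcal R_{\beta^n}[\psi]=\psi$ for every $n\in\mathbb N$.
   Context: Let $c=\gamma-d-1$. For $\beta\in(0,1)$ and $\vartheta:\mathbb R^d\to\mathbb C^d$, $$\mathcal R_\beta[\vartheta](\eta)=\beta^c e^{|\eta|^\gamma(1-\beta^{-\gamma})}\vartheta(\eta/\beta)+i\gamma\int_1^{1/\beta}\frac{e^{|\eta|^\gamma(1-t^\gamma)}}{t^c}\int_{\mathbb R^d}\big(\eta\cdot\vartheta(\eta t-x)\big)\,P_\eta\vartheta(x)\,dx\,dt,$$ where $a\cdot b=\sum_ja_jb_j$ and $P_\eta w=w-\frac{w\cdot\eta}{|\eta|^2}\eta$. *)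

theory Defs
  imports "HOL-Analysis.Analysis"
begin

text \<open>Vectors in C^d are modelled as complex^'n, vectors in R^d as real^'n,
  with d = CARD('n).\<close>

definition cvec :: "real^'n \<Rightarrow> complex^'n" where
  "cvec \<eta> = (\<chi> j. complex_of_real (\<eta> $ j))"

text \<open>Bilinear (non-conjugated) dot product a . b = sum_j a_j b_j.\<close>
definition cdot :: "complex^'n \<Rightarrow> complex^'n \<Rightarrow> complex" where
  "cdot a b = (\<Sum>j\<in>UNIV. a $ j * b $ j)"

definition cscale :: "complex \<Rightarrow> complex^'n \<Rightarrow> complex^'n" where
  "cscale s w = (\<chi> j. s * w $ j)"

definition Pproj :: "real^'n \<Rightarrow> complex^'n \<Rightarrow> complex^'n" where
  "Pproj \<eta> w = w - cscale (cdot w (cvec \<eta>) / complex_of_real ((norm \<eta>)\<^sup>2)) (cvec \<eta>)"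

definition cexp :: "real \<Rightarrow> 'n::finite itself \<Rightarrow> real" where
  "cexp \<gamma> _ = \<gamma> - real CARD('n) - 1"

definition inner_integrand ::
  "(real^'n \<Rightarrow> complex^'n) \<Rightarrow> real^'n \<Rightarrow> real \<Rightarrow> real^'n \<Rightarrow> complex^'n" where
  "inner_integrand \<theta> \<eta> t x = cscale (cdot (cvec \<eta>) (\<theta> (t *\<^sub>R \<eta> - x))) (Pproj \<eta> (\<theta> x))"

definition inner_int ::
  "(real^'n \<Rightarrow> complex^'n) \<Rightarrow> real^'n \<Rightarrow> real \<Rightarrow> complex^'n" where
  "inner_int \<theta> \<eta> t = integral\<^sup>L lborel (inner_integrand \<theta> \<eta> t)"

definition outer_integrand ::
  "real \<Rightarrow> (real^'n \<Rightarrow> complex^'n) \<Rightarrow> real^'n \<Rightarrow> real \<Rightarrow> complex^'n" where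
  "outer_integrand \<gamma> \<theta> \<eta> t =
     (exp ((norm \<eta>) powr \<gamma> * (1 - t powr \<gamma>)) / t powr (cexp \<gamma> TYPE('n)))
       *\<^sub>R inner_int \<theta> \<eta> t"

definition Rop ::
  "real \<Rightarrow> real \<Rightarrow> (real^'n \<Rightarrow> complex^'n) \<Rightarrow> real^'n \<Rightarrow> complex^'n" where
  "Rop \<gamma> \<beta> \<theta> \<eta> =
     (\<beta> powr (cexp \<gamma> TYPE('n)) * exp ((norm \<eta>) powr \<gamma> * (1 - \<beta> powr (-\<gamma>))))
        *\<^sub>R \<theta> ((1 / \<beta>) *\<^sub>R \<eta>)
     + cscale (\<i> * complex_of_real \<gamma>)
         (set_lebesgue_integral lborel {1..1/\<beta>} (outer_integrand \<gamma> \<theta> \<eta>))"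

end

theory Submission
  imports Defs
begin

text \<open>Split the outer integral of R_{ab}[\<theta>](\<eta>) at 1/a and substitute t = s/a on
  (1/a, 1/(ab)]. The inner integral is homogeneous: its integrand at (\<eta>, s/a) is a times the
  integrand at (\<eta>/a, s), because P_\<eta> depends only on the direction of \<eta>. Hence the first
  term and the tail together equal a^c e^{|\<eta>|^\<gamma> (1 - a^{-\<gamma>})} R_b[\<theta>](\<eta>/a), so a fixed point
  of R_b satisfies R_{ab}[\<theta>] = R_a[\<theta>]. As R_1 is the identity, induction on n gives
  R_{\<beta>^n}[\<psi>] = \<psi>.\<close>

lemma cdot_cvec_scaleR_left: "cdot (cvec (r *\<^sub>R \<eta>)) w = complex_of_real r * cdot (cvec \<eta>) w"
  unfolding cdot_def cvec_def by (simp add: sum_distrib_left algebra_simps)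

lemma cdot_cvec_scaleR_right: "cdot w (cvec (r *\<^sub>R \<eta>)) = complex_of_real r * cdot w (cvec \<eta>)"
  unfolding cdot_def cvec_def by (simp add: sum_distrib_left algebra_simps)

lemma cscale_add: "cscale z (u + v) = cscale z u + cscale z v"
  unfolding cscale_def by (simp add: vec_eq_iff algebra_simps)

lemma cscale_scaleR: "cscale z (r *\<^sub>R v) = r *\<^sub>R cscale z v"
  unfolding cscale_def by (simp add: vec_eq_iff)

lemma cscale_of_real_mult: "cscale (complex_of_real r * z) v = r *\<^sub>R cscale z v"
  unfolding cscale_def by (simp add: vec_eq_iff) (simp add: scaleR_conv_of_real)

lemma cscale_zero [simp]: "cscale z 0 = 0"
  unfolding cscale_def by (simp add: vec_eq_iff)

lemma Pproj_scaleR: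
  assumes "r \<noteq> 0"
  shows "Pproj (r *\<^sub>R \<eta>) = Pproj \<eta>"
proof -
  have "complex_of_real r * X / complex_of_real ((norm (r *\<^sub>R \<eta>))\<^sup>2) * (complex_of_real r * v)
      = X / complex_of_real ((norm \<eta>)\<^sup>2) * v" for X v
  proof (cases "\<eta> = 0")
    case False
    have "complex_of_real \<bar>r\<bar> * complex_of_real \<bar>r\<bar> = complex_of_real r * complex_of_real r"
      by (metis abs_mult_self_eq of_real_mult)
    with assms False show ?thesis
      by (simp add: power2_eq_square field_simps)
  qed simp
  then show ?thesis
    unfolding Pproj_def cscale_def cdot_cvec_scaleR_right
    by (simp add: fun_eq_iff vec_eq_iff cvec_def)
qed

lemma inner_int_rescale:
  assumes "a > 0"
  shows "inner_int \<theta> \<eta> (s / a) = a *\<^sub>R inner_int \<theta> ((1/a) *\<^sub>R \<eta>) s"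
proof -
  have \<eta>: "\<eta> = a *\<^sub>R ((1/a) *\<^sub>R \<eta>)" and "(s / a) *\<^sub>R \<eta> = s *\<^sub>R ((1/a) *\<^sub>R \<eta>)"
    using assms by simp_all
  moreover have "cdot (cvec \<eta>) w = complex_of_real a * cdot (cvec ((1/a) *\<^sub>R \<eta>)) w" for w
    by (subst \<eta>) (rule cdot_cvec_scaleR_left)
  moreover have "Pproj \<eta> = Pproj ((1/a) *\<^sub>R \<eta>)"
    using Pproj_scaleR[of "1/a" \<eta>] assms by simp
  ultimately have "inner_integrand \<theta> \<eta> (s/a) = (\<lambda>x. a *\<^sub>R inner_integrand \<theta> ((1/a) *\<^sub>R \<eta>) s x)"
    unfolding inner_integrand_def by (simp add: cscale_of_real_mult)
  then show ?thesis
    unfolding inner_int_def by simp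
qed

lemma outer_integrand_rescale:
  fixes \<theta> :: "real^'n \<Rightarrow> complex^'n"
  assumes a: "a > 0" and s: "s > 0"
  shows "outer_integrand \<gamma> \<theta> \<eta> (s / a) =
    (a * a powr cexp \<gamma> TYPE('n) * exp ((norm \<eta>) powr \<gamma> * (1 - a powr (-\<gamma>))))
      *\<^sub>R outer_integrand \<gamma> \<theta> ((1/a) *\<^sub>R \<eta>) s"
proof -
  define c where "c = cexp \<gamma> TYPE('n)"
  define N where "N = (norm \<eta>) powr \<gamma>"
  have "(norm ((1/a) *\<^sub>R \<eta>)) powr \<gamma> = N / a powr \<gamma>"
    using a by (simp add: N_def powr_divide)
  moreover have "(s/a) powr \<gamma> = s powr \<gamma> / a powr \<gamma>" "(s/a) powr c = s powr c / a powr c"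
    using a s by (simp_all add: powr_divide)
  moreover have "a powr (-\<gamma>) = 1 / a powr \<gamma>"
    using a by (simp add: powr_minus_divide)
  moreover have "exp (N * (1 - s powr \<gamma> / a powr \<gamma>)) / (s powr c / a powr c) * a =
      a * a powr c * exp (N * (1 - 1 / a powr \<gamma>)) * (exp (N / a powr \<gamma> * (1 - s powr \<gamma>)) / s powr c)"
  proof -
    have "exp (N * (1 - s powr \<gamma> / a powr \<gamma>)) =
        exp (N * (1 - 1 / a powr \<gamma>)) * exp (N / a powr \<gamma> * (1 - s powr \<gamma>))"
      by (simp add: exp_add[symmetric] algebra_simps diff_divide_distrib)
    then show ?thesis
      using a s by (simp add: field_simps)
  qed
  ultimately show ?thesis
    unfolding outer_integrand_def inner_int_rescale[OF a] c_def[symmetric] N_def[symmetric]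
    by simp
qed

lemma set_integral_Icc_eq_Ioc:
  fixes a b :: real and f :: "real \<Rightarrow> 'a::{banach, second_countable_topology}"
  assumes "a \<le> b"
  shows "(LINT x:{a..b}|lborel. f x) = (LINT x:{a<..b}|lborel. f x)"
  using interval_integral_Icc[OF assms, of f] interval_integral_Ioc[of a b f] assms by simp

lemma set_integral_Ioc_rescale:
  fixes f :: "real \<Rightarrow> 'a::{banach, second_countable_topology}"
  assumes "a > 0"
  shows "(LINT x:{p/a<..q/a}|lborel. f x) = (1/a) *\<^sub>R (LINT s:{p<..q}|lborel. f (s/a))"
proof -
  have "(LINT x:{p/a<..q/a}|lborel. f x)
      = \<bar>1/a\<bar> *\<^sub>R (\<integral>s. indicator {p/a<..q/a} (0 + (1/a) * s) *\<^sub>R f (0 + (1/a) * s) \<partial>lborel)"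
    unfolding set_lebesgue_integral_def
    by (rule lborel_integral_real_affine) (use assms in simp)
  also have "(\<lambda>s. indicator {p/a<..q/a} (0 + (1/a) * s) *\<^sub>R f (0 + (1/a) * s))
      = (\<lambda>s. indicator {p<..q} s *\<^sub>R f (s/a))"
    using assms by (auto simp: fun_eq_iff field_simps split: split_indicator)
  finally show ?thesis
    using assms unfolding set_lebesgue_integral_def by simp
qed

lemma Rop_one: "Rop \<gamma> 1 \<theta> = \<theta>"
proof
  fix \<eta>
  show "Rop \<gamma> 1 \<theta> \<eta> = \<theta> \<eta>"
    using set_integral_Icc_eq_Ioc[of 1 1 "outer_integrand \<gamma> \<theta> \<eta>"]
    by (simp add: Rop_def set_lebesgue_integral_def)
qed

lemma Rop_mult:
  fixes \<theta> :: "real^'n \<Rightarrow> complex^'n"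
  assumes a: "0 < a" "a \<le> 1" and b: "0 < b" "b \<le> 1"
    and int: "\<And>\<eta> T. T \<ge> 1 \<Longrightarrow> set_integrable lborel {1..T} (outer_integrand \<gamma> \<theta> \<eta>)"
  shows "Rop \<gamma> (a*b) \<theta> \<eta> =
    (a powr cexp \<gamma> TYPE('n) * exp ((norm \<eta>) powr \<gamma> * (1 - a powr (-\<gamma>))))
      *\<^sub>R Rop \<gamma> b \<theta> ((1/a) *\<^sub>R \<eta>)
    + cscale (\<i> * complex_of_real \<gamma>) (LINT t:{1..1/a}|lborel. outer_integrand \<gamma> \<theta> \<eta> t)"
proof -
  define c where "c = cexp \<gamma> TYPE('n)"
  define E where "E = exp ((norm \<eta>) powr \<gamma> * (1 - a powr (-\<gamma>)))"
  define \<eta>' where "\<eta>' = (1/a) *\<^sub>R \<eta>"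
  define F where "F = outer_integrand \<gamma> \<theta> \<eta>"
  define G where "G = outer_integrand \<gamma> \<theta> \<eta>'"
  have ab: "1 \<le> 1/a" "1/a \<le> 1/(a*b)" "1 \<le> 1/b"
    using a b by (simp_all add: field_simps)
  have F_int: "set_integrable lborel {1..1/(a*b)} F"
    unfolding F_def using int ab by auto
  have Icc_split: "{1..1/(a*b)} = {1..1/a} \<union> {1/a<..1/(a*b)}"
    using ab by auto
  have split: "(LINT t:{1..1/(a*b)}|lborel. F t)
      = (LINT t:{1..1/a}|lborel. F t) + (LINT t:{1/a<..1/(a*b)}|lborel. F t)"
    unfolding Icc_split
    by (rule set_integral_Un) (auto intro!: set_integrable_subset[OF F_int] simp: Icc_split)
  have "F (s/a) = (a * a powr c * E) *\<^sub>R G s" if "s \<in> {1<..1/b}" for s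
    using that outer_integrand_rescale[OF a(1), of s \<gamma> \<theta> \<eta>]
    by (simp add: F_def G_def \<eta>'_def c_def E_def)
  then have "(\<lambda>s. indicator {1<..1/b} s *\<^sub>R F (s/a))
      = (\<lambda>s. (a * a powr c * E) *\<^sub>R (indicator {1<..1/b} s *\<^sub>R G s))"
    by (auto simp: fun_eq_iff split: split_indicator)
  then have "(LINT s:{1<..1/b}|lborel. F (s/a))
      = (a * a powr c * E) *\<^sub>R (LINT s:{1<..1/b}|lborel. G s)"
    unfolding set_lebesgue_integral_def integral_scaleR_right[symmetric] by (simp only:)
  then have tail: "(LINT t:{1/a<..1/(a*b)}|lborel. F t)
      = (a powr c * E) *\<^sub>R (LINT s:{1..1/b}|lborel. G s)"
    using set_integral_Ioc_rescale[OF a(1), where f=F and p=1 and q="1/b"]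
      set_integral_Icc_eq_Ioc[OF ab(3), of G] a
    by (simp add: field_simps)
  have "(a*b) powr c = a powr c * b powr c" "(1 / (a*b)) *\<^sub>R \<eta> = (1/b) *\<^sub>R \<eta>'"
    using a b by (simp_all add: powr_mult \<eta>'_def)
  moreover have "exp (norm \<eta> powr \<gamma> * (1 - (a * b) powr - \<gamma>)) =
      E * exp (norm \<eta>' powr \<gamma> * (1 - b powr - \<gamma>))"
  proof -
    have "norm \<eta>' powr \<gamma> = norm \<eta> powr \<gamma> * a powr - \<gamma>"
      using a by (simp add: \<eta>'_def powr_divide powr_minus_divide)
    moreover have "(a * b) powr - \<gamma> = a powr - \<gamma> * b powr - \<gamma>"
      using a b by (simp add: powr_mult)
    ultimately show ?thesis
      unfolding E_def by (simp add: exp_add[symmetric] algebra_simps)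
  qed
  ultimately show ?thesis
    unfolding Rop_def c_def[symmetric] E_def[symmetric] \<eta>'_def[symmetric] F_def[symmetric]
      G_def[symmetric] split tail
    by (simp add: cscale_add cscale_scaleR algebra_simps)
qed

lemma Rop_mult_of_fixed:
  fixes \<theta> :: "real^'n \<Rightarrow> complex^'n"
  assumes "0 < a" "a \<le> 1" "0 < b" "b \<le> 1"
    and "\<And>\<eta> T. T \<ge> 1 \<Longrightarrow> set_integrable lborel {1..T} (outer_integrand \<gamma> \<theta> \<eta>)"
    and "Rop \<gamma> b \<theta> = \<theta>"
  shows "Rop \<gamma> (a*b) \<theta> = Rop \<gamma> a \<theta>"
  using Rop_mult[OF assms(1-5)] assms(6) by (simp add: fun_eq_iff Rop_def)

theorem lemma10p1:
  fixes \<psi> :: "real^'n \<Rightarrow> complex^'n" and \<gamma> \<beta> :: real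
  assumes "CARD('n) \<ge> 2"
    and "\<gamma> > 0"
    and "0 < \<beta>" and "\<beta> < 1"
    and "\<And>\<eta> t. t \<ge> 1 \<Longrightarrow> integrable lborel (inner_integrand \<psi> \<eta> t)"
    and "\<And>\<eta> T. T \<ge> 1 \<Longrightarrow> set_integrable lborel {1..T} (outer_integrand \<gamma> \<psi> \<eta>)"
    and "Rop \<gamma> \<beta> \<psi> = \<psi>"
  shows "\<forall>n::nat. Rop \<gamma> (\<beta> ^ n) \<psi> = \<psi>"
proof
  fix n :: nat
  show "Rop \<gamma> (\<beta> ^ n) \<psi> = \<psi>"
  proof (induction n)
    case 0
    show ?case by (simp add: Rop_one)
  next
    case (Suc n)
    have "0 < \<beta> ^ n" "\<beta> ^ n \<le> 1"
      using assms(3,4) by (simp_all add: power_le_one)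
    then have "Rop \<gamma> (\<beta> * \<beta> ^ n) \<psi> = Rop \<gamma> \<beta> \<psi>"
      using Rop_mult_of_fixed[OF assms(3) _ _ _ assms(6) Suc.IH] assms(4) by simp
    then show ?case using assms(7) by simp
  qed
qed

end
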